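(* Let $q\in(0,1)$ and let $W\in\mathbb{R}^{I\times I}$ be a nonnegative matrix with zero diagonal, $\mathbf{1}^*W\mathbf{1}=1$ and $W\mathbf{1}=W^*\mathbf{1}$. Consider the Asynchronous Asymmetric Gossip Algorithm: at each time $t$, independently of the past, an ordered pair $(i,j)$ is sampled with probability $W_{ij}$, then $x_i(t+1)=(1-q)x_i(t)+qx_j(t)$ and $x_k(t+1)=x_k(t)$ for $k\ne i$. Then for every $t\ge0$, $$\mathbb{E}[(\bar x(t)-\bar x(0))^2]\le\frac{q}{N(1-q)+q}V(x(0)).$$
   Context: $I$ is a finite set of $N$ nodes, $x(0)\in\mathbb{R}^I$ deterministic. $\mathbf{1}$ is the all-ones vector, $W^*$ the transpose. For $y\in\mathbb{R}^I$, $\bar y=\frac1N\sum_i y_i$ and $V(y)=\frac1N\sum_i(y_i-\bar y)^2$. *)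

theory Defs
  imports "HOL-Probability.Probability"
begin

text \<open>Node set I is modelled by a finite type 'i; N = CARD('i).\<close>

definition avg :: "('i::finite \<Rightarrow> real) \<Rightarrow> real" where
  "avg y = (\<Sum>i\<in>UNIV. y i) / real CARD('i)"

definition var :: "('i::finite \<Rightarrow> real) \<Rightarrow> real" where
  "var y = (\<Sum>i\<in>UNIV. (y i - avg y)^2) / real CARD('i)"

definition gossip_step :: "real \<Rightarrow> ('i \<Rightarrow> real) \<Rightarrow> 'i \<times> 'i \<Rightarrow> ('i \<Rightarrow> real)" where
  "gossip_step q x p = (case p of (i, j) \<Rightarrow> x(i := (1 - q) * x i + q * x j))"

definition pair_pmf :: "('i \<Rightarrow> 'i \<Rightarrow> real) \<Rightarrow> ('i \<times> 'i) pmf" where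
  "pair_pmf W = embed_pmf (\<lambda>(i, j). W i j)"

text \<open>Law of x(t): pairs are sampled independently of the past at each time step.\<close>
primrec gossip_dist :: "real \<Rightarrow> ('i \<Rightarrow> 'i \<Rightarrow> real) \<Rightarrow> ('i \<Rightarrow> real) \<Rightarrow> nat \<Rightarrow> ('i \<Rightarrow> real) pmf" where
  "gossip_dist q W x0 0 = return_pmf x0"
| "gossip_dist q W x0 (Suc t) =
     bind_pmf (gossip_dist q W x0 t) (\<lambda>x. map_pmf (gossip_step q x) (pair_pmf W))"

end

theory Submission
  imports Defs
begin

(* The quantity
     potential q x0 x = (avg x - avg x0)^2 + c * var x,   c = q / (N (1 - q) + q),
   is a martingale of the gossip process: its expectation after one gossip
   step from any state x equals its value at x.  Indeed, updating node i
   towards node j changes the potential by A(x) (x_j - x_i) + (c q / N) (x_j^2 - x_i^2);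
   the choice of c is exactly what makes the (x_j - x_i)^2 contributions cancel.
   Both remaining terms have the form g j - g i, and their W-average vanishes
   because W is balanced (equal row and column sums).  Hence
   E[potential (x t)] = potential x0 = c * var x0, and dropping the nonnegative
   variance term yields the theorem. *)

lemma sum_fun_upd:
  fixes x :: "'i::finite \<Rightarrow> 'a::ab_group_add"
  shows "(\<Sum>k\<in>UNIV. (x(i := v)) k) = (\<Sum>k\<in>UNIV. x k) + (v - x i)"
proof -
  have "(\<Sum>k\<in>UNIV. (x(i := v)) k) = (\<Sum>k\<in>UNIV. x k + (if k = i then v - x i else 0))"
    by (intro sum.cong) auto
  then show ?thesis by (simp add: sum.distrib)
qed

lemma var_moments:
  fixes x :: "'i::finite \<Rightarrow> real"
  shows "var x = (\<Sum>k\<in>UNIV. (x k)^2) / real CARD('i) - (avg x)^2"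
proof -
  define N where "N = real CARD('i)"
  have N: "N > 0" unfolding N_def by simp
  have sum_x: "(\<Sum>k\<in>UNIV. x k) = N * avg x" using N unfolding avg_def N_def by simp
  have "(\<Sum>k\<in>UNIV. (x k - avg x)^2) = (\<Sum>k\<in>UNIV. (x k)^2 - 2 * avg x * x k + (avg x)^2)"
    by (intro sum.cong) (auto simp: power2_eq_square algebra_simps)
  also have "\<dots> = (\<Sum>k\<in>UNIV. (x k)^2) - 2 * avg x * (\<Sum>k\<in>UNIV. x k) + N * (avg x)^2"
    by (simp add: sum.distrib sum_subtractf sum_distrib_left N_def)
  finally show ?thesis unfolding var_def N_def[symmetric] sum_x using N
    by (simp add: field_simps power2_eq_square)
qed

lemma var_nonneg: "0 \<le> var (x :: 'i::finite \<Rightarrow> real)"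
  unfolding var_def by (intro divide_nonneg_nonneg sum_nonneg) auto

definition potential :: "real \<Rightarrow> ('i::finite \<Rightarrow> real) \<Rightarrow> ('i \<Rightarrow> real) \<Rightarrow> real" where
  "potential q x0 x = (avg x - avg x0)^2 + q / (real CARD('i) * (1 - q) + q) * var x"

(* Nonnegativity is needed to pass between Lebesgue and Bochner expectations. *)
lemma potential_nonneg:
  assumes "0 < q" "q < 1"
  shows "0 \<le> potential q x0 x"
proof -
  have "0 < real CARD('i) * (1 - q) + q" using assms by (intro add_nonneg_pos) auto
  then show ?thesis
    unfolding potential_def using assms var_nonneg[of x] by simp
qed

(* The quadratic terms in x_j - x_i cancel precisely because c (N (1 - q) + q) = q;
   what remains is a combination of differences g j - g i. *)
lemma potential_update:
  fixes x :: "'i::finite \<Rightarrow> real"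
  assumes "0 < q" "q < 1"
  defines "N \<equiv> real CARD('i)"
  defines "c \<equiv> q / (N * (1 - q) + q)"
  shows "potential q x0 (x(i := (1 - q) * x i + q * x j)) = potential q x0 x
           + 2 * q / N * (avg x - avg x0 - c * avg x) * (x j - x i)
           + c * q / N * ((x j)^2 - (x i)^2)"
proof -
  have N: "N > 0" unfolding N_def by simp
  have den: "N * (1 - q) + q > 0" using N assms by (intro add_nonneg_pos) auto
  have avg_upd: "avg (x(i := (1 - q) * x i + q * x j)) = avg x + q * (x j - x i) / N"
    unfolding avg_def sum_fun_upd N_def[symmetric] using N by (simp add: field_simps)
  have sq_upd: "(\<Sum>k\<in>UNIV. ((x(i := (1 - q) * x i + q * x j)) k)^2)
      = (\<Sum>k\<in>UNIV. (x k)^2) + (((1 - q) * x i + q * x j)^2 - (x i)^2)"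
    using sum_fun_upd[of "\<lambda>k. (x k)^2" i "((1 - q) * x i + q * x j)^2"]
    by (simp add: fun_upd_def if_distrib[of "\<lambda>y. y^2"] cong: if_cong)
  have c_den: "c * (N * (1 - q) + q) = q" unfolding c_def using den by simp
  have d2_coeff: "q^2 / N^2 + c * q^2 / N - c * q^2 / N^2 - c * q / N = 0"
  proof -
    have "q^2 / N^2 + c * q^2 / N - c * q^2 / N^2 - c * q / N = q * (q - c * (N * (1 - q) + q)) / N^2"
      using N by (simp add: field_simps power2_eq_square)
    then show ?thesis unfolding c_den by simp
  qed
  have "potential q x0 (x(i := (1 - q) * x i + q * x j)) - (potential q x0 x
           + 2 * q / N * (avg x - avg x0 - c * avg x) * (x j - x i)
           + c * q / N * ((x j)^2 - (x i)^2))
      = (x j - x i)^2 * (q^2 / N^2 + c * q^2 / N - c * q^2 / N^2 - c * q / N)"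
    unfolding potential_def var_moments avg_upd sq_upd N_def[symmetric] c_def[symmetric]
    using N by (simp add: field_simps power2_eq_square)
  then show ?thesis unfolding d2_coeff by simp
qed

lemma balanced_weights_difference:
  fixes W :: "'i::finite \<Rightarrow> 'i \<Rightarrow> 'a::comm_ring_1"
  assumes bal: "\<And>i. (\<Sum>j\<in>UNIV. W i j) = (\<Sum>j\<in>UNIV. W j i)"
  shows "(\<Sum>i\<in>UNIV. \<Sum>j\<in>UNIV. W i j * (g j - g i)) = 0"
proof -
  have "(\<Sum>i\<in>UNIV. \<Sum>j\<in>UNIV. W i j * g j) = (\<Sum>j\<in>UNIV. (\<Sum>i\<in>UNIV. W i j) * g j)"
    by (subst sum.swap) (simp add: sum_distrib_right)
  also have "\<dots> = (\<Sum>i\<in>UNIV. (\<Sum>j\<in>UNIV. W i j) * g i)"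
    using bal by simp
  finally show ?thesis
    by (simp add: right_diff_distrib sum_subtractf sum_distrib_right)
qed

lemma potential_mean_step:
  fixes W :: "'i::finite \<Rightarrow> 'i \<Rightarrow> real"
  assumes q: "0 < q" "q < 1"
    and tot: "(\<Sum>i\<in>UNIV. \<Sum>j\<in>UNIV. W i j) = 1"
    and bal: "\<And>i. (\<Sum>j\<in>UNIV. W i j) = (\<Sum>j\<in>UNIV. W j i)"
  shows "(\<Sum>i\<in>UNIV. \<Sum>j\<in>UNIV. W i j * potential q x0 (gossip_step q x (i, j)))
           = potential q x0 x"
proof -
  define N where "N = real CARD('i)"
  define c where "c = q / (N * (1 - q) + q)"
  define A where "A = 2 * q / N * (avg x - avg x0 - c * avg x)"
  define B where "B = c * q / N"
  have "W i j * potential q x0 (gossip_step q x (i, j))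
      = W i j * potential q x0 x + A * (W i j * (x j - x i)) + B * (W i j * ((x j)^2 - (x i)^2))"
    for i j
    unfolding gossip_step_def split potential_update[OF q]
    unfolding N_def[symmetric] c_def[symmetric] A_def[symmetric] B_def[symmetric]
    by (simp add: algebra_simps)
  then have "(\<Sum>i\<in>UNIV. \<Sum>j\<in>UNIV. W i j * potential q x0 (gossip_step q x (i, j)))
      = (\<Sum>i\<in>UNIV. \<Sum>j\<in>UNIV. W i j) * potential q x0 x
        + A * (\<Sum>i\<in>UNIV. \<Sum>j\<in>UNIV. W i j * (x j - x i))
        + B * (\<Sum>i\<in>UNIV. \<Sum>j\<in>UNIV. W i j * ((x j)^2 - (x i)^2))"
    by (simp add: sum.distrib sum_distrib_left sum_distrib_right)
  also have "\<dots> = potential q x0 x"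
    using balanced_weights_difference[OF bal, of x]
      balanced_weights_difference[OF bal, of "\<lambda>k. (x k)^2"]
    by (simp add: tot)
  finally show ?thesis .
qed

lemma pmf_pair_pmf:
  fixes W :: "'i::finite \<Rightarrow> 'i \<Rightarrow> real"
  assumes nn: "\<And>i j. 0 \<le> W i j"
    and tot: "(\<Sum>i\<in>UNIV. \<Sum>j\<in>UNIV. W i j) = 1"
  shows "pmf (pair_pmf W) (i, j) = W i j"
proof -
  have "(\<integral>\<^sup>+p. ennreal (case p of (i, j) \<Rightarrow> W i j) \<partial>count_space UNIV)
      = ennreal (\<Sum>p\<in>UNIV. case p of (i, j) \<Rightarrow> W i j)"
    using nn by (simp add: nn_integral_count_space_finite sum_ennreal split_beta)
  also have "(\<Sum>p\<in>UNIV. case p of (i, j) \<Rightarrow> W i j) = (\<Sum>i\<in>UNIV. \<Sum>j\<in>UNIV. W i j)"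
    by (simp add: UNIV_Times_UNIV[symmetric] sum.cartesian_product del: UNIV_Times_UNIV)
  finally show ?thesis
    unfolding pair_pmf_def using nn tot by (subst pmf_embed_pmf) auto
qed

lemma expectation_pair_pmf:
  fixes W :: "'i::finite \<Rightarrow> 'i \<Rightarrow> real" and f :: "'i \<times> 'i \<Rightarrow> real"
  assumes nn: "\<And>i j. 0 \<le> W i j"
    and tot: "(\<Sum>i\<in>UNIV. \<Sum>j\<in>UNIV. W i j) = 1"
  shows "measure_pmf.expectation (pair_pmf W) f = (\<Sum>i\<in>UNIV. \<Sum>j\<in>UNIV. W i j * f (i, j))"
proof -
  have "measure_pmf.expectation (pair_pmf W) f = (\<Sum>p\<in>UNIV. f p * pmf (pair_pmf W) p)"
    by (rule integral_measure_pmf_real) auto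
  also have "\<dots> = (\<Sum>i\<in>UNIV. \<Sum>j\<in>UNIV. W i j * f (i, j))"
    by (simp add: UNIV_Times_UNIV[symmetric] sum.cartesian_product del: UNIV_Times_UNIV)
      (intro sum.cong, auto simp: pmf_pair_pmf[OF nn tot] mult.commute)
  finally show ?thesis .
qed

lemma expectation_bind_pmf_invariant:
  fixes f :: "'a \<Rightarrow> real"
  assumes fin: "finite (set_pmf p)" "\<And>x. finite (set_pmf (K x))"
    and nonneg: "\<And>y. 0 \<le> f y"
    and invariant: "\<And>x. measure_pmf.expectation (K x) f = f x"
  shows "measure_pmf.expectation (bind_pmf p K) f = measure_pmf.expectation p f"
proof -
  have nn_eq: "(\<integral>\<^sup>+y. ennreal (f y) \<partial>r) = ennreal (measure_pmf.expectation r f)"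
    if "finite (set_pmf r)" for r :: "'a pmf"
    using that nonneg by (intro nn_integral_eq_integral integrable_measure_pmf_finite) auto
  have "finite (set_pmf (bind_pmf p K))" using fin by simp
  then have "ennreal (measure_pmf.expectation (bind_pmf p K) f)
      = (\<integral>\<^sup>+y. ennreal (f y) \<partial>bind_pmf p K)"
    by (rule nn_eq[symmetric])
  also have "\<dots> = (\<integral>\<^sup>+x. \<integral>\<^sup>+y. ennreal (f y) \<partial>K x \<partial>p)"
    by (rule nn_integral_bind_pmf)
  also have "\<dots> = ennreal (measure_pmf.expectation p f)"
    by (simp add: nn_eq fin invariant)
  finally show ?thesis
    using nonneg by (simp add: integral_nonneg_AE)
qed

lemma finite_set_gossip_dist:
  "finite (set_pmf (gossip_dist q (W :: 'i::finite \<Rightarrow> 'i \<Rightarrow> real) x0 t))"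
  by (induction t) auto

lemma expectation_potential_gossip_dist:
  fixes W :: "'i::finite \<Rightarrow> 'i \<Rightarrow> real"
  assumes q: "0 < q" "q < 1"
    and nn: "\<And>i j. 0 \<le> W i j"
    and tot: "(\<Sum>i\<in>UNIV. \<Sum>j\<in>UNIV. W i j) = 1"
    and bal: "\<And>i. (\<Sum>j\<in>UNIV. W i j) = (\<Sum>j\<in>UNIV. W j i)"
  shows "measure_pmf.expectation (gossip_dist q W x0 t) (potential q x0) = potential q x0 x0"
proof (induction t)
  case 0
  then show ?case by simp
next
  case (Suc t)
  have "measure_pmf.expectation (map_pmf (gossip_step q x) (pair_pmf W)) (potential q x0)
      = potential q x0 x" for x
    using potential_mean_step[OF q tot bal] by (simp add: expectation_pair_pmf[OF nn tot])
  then show ?case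
    using Suc by (simp add: expectation_bind_pmf_invariant finite_set_gossip_dist potential_nonneg[OF q])
qed

(* Main theorem. *)
theorem mainTheorem10:
  fixes q :: real and W :: "'i::finite \<Rightarrow> 'i \<Rightarrow> real" and x0 :: "'i \<Rightarrow> real" and t :: nat
  assumes "0 < q" "q < 1"
    and "\<And>i j. W i j \<ge> 0"
    and "\<And>i. W i i = 0"
    and "(\<Sum>i\<in>UNIV. \<Sum>j\<in>UNIV. W i j) = 1"
    and "\<And>i. (\<Sum>j\<in>UNIV. W i j) = (\<Sum>j\<in>UNIV. W j i)"
  shows "measure_pmf.expectation (gossip_dist q W x0 t) (\<lambda>x. (avg x - avg x0)^2)
           \<le> q / (real CARD('i) * (1 - q) + q) * var x0"
proof -
  let ?c = "q / (real CARD('i) * (1 - q) + q)"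
  have c_nonneg: "0 \<le> ?c"
    using assms(1,2) by (intro divide_nonneg_pos add_nonneg_pos) auto
  have "measure_pmf.expectation (gossip_dist q W x0 t) (\<lambda>x. (avg x - avg x0)^2)
      \<le> measure_pmf.expectation (gossip_dist q W x0 t) (potential q x0)"
    unfolding potential_def using mult_nonneg_nonneg[OF c_nonneg var_nonneg]
    by (intro integral_mono integrable_measure_pmf_finite finite_set_gossip_dist) auto
  also have "\<dots> = potential q x0 x0"
    using assms(1,2,3,5,6) by (rule expectation_potential_gossip_dist)
  also have "\<dots> = ?c * var x0"
    unfolding potential_def by simp
  finally show ?thesis .
qed

end
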